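(* Let $(\mathfrak g,[\,,\,]_0,\rho,[\,,\,],\mathfrak B,r,\lambda)$ be a triple Lie algebra and $\{\,,\,\}_r$ the Lie–Poisson bracket $\{f,g\}_r(a^* )=\langle[df(a^* ),dg(a^* )]_r,a^*\rangle$ on $\mathfrak g^*$. Let $\mathcal H\in C^\infty(\mathfrak g^* )$ satisfy $\langle d\mathcal H(a^* ),\rho^*(x)a^*\rangle=\langle d\mathcal H(a^* ),\mathrm{ad}^*(x)a^*\rangle=0$ for all $a^*\in\mathfrak g^*$, $x\in\mathfrak g$. Let $\{e_i\}$ be a basis of $\mathfrak g$ and $\{e^i\}$ the dual basis with respect to $\mathfrak B$ ($\mathfrak B(e_i,e^j)=\delta_{ij}$), $\Omega=\sum_ie_i\otimes e^i$, and define smooth maps $L,M:\mathfrak g^*\to\mathfrak g$ by $L(a^* )=(a^*\otimes1)(\Omega)=\sum_i\langle a^*,e_i\rangle e^i$ and $M(a^* )=\tilde r(d\mathcal H(a^* ))$. Then $dL(a^* )X_{\mathcal H}(a^* )=-\rho(M(a^* ))L(a^* )$ for all $a^*\in\mathfrak g^*$, where $X_{\mathcal H}f=\{\mathcal H,f\}_r$; hence $(\mathfrak g,\rho,\mathfrak g,L,M)$ is a self-dual nonabelian generalized Lax pair for the Hamiltonian system $(\mathfrak g^*,\{\,,\,\}_r,\mathcal H)$ (with $\mathfrak a=(\mathfrak g,[\,,\,])$ and form $\mathfrak B$).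
   Context: All spaces are finite-dimensional real. A triple Lie algebra $(\mathfrak g,[\,,\,]_0,\rho,[\,,\,],\mathfrak B,r,\lambda)$ consists of: a Lie algebra $(\mathfrak g,[\,,\,]_0)$; a second Lie bracket $[\,,\,]$ on the same vector space and a representation $\rho$ of $(\mathfrak g,[\,,\,]_0)$ on $\mathfrak g$ with each $\rho(x)$ a derivation of $(\mathfrak g,[\,,\,])$ (write $x\cdot y=\rho(x)y$); a nondegenerate symmetric bilinear form $\mathfrak B$ with $\mathfrak B([x,y],z)=\mathfrak B(x,[y,z])$ and $\mathfrak B(\rho(\xi)x,y)+\mathfrak B(x,\rho(\xi)y)=0$; an element $r\in\mathfrak g\otimes\mathfrak g$, identified with $r:\mathfrak g^*\to\mathfrak g$ by $\langle r(a^* ),b^*\rangle=\langle a^*\otimes b^*,r\rangle$, and $\lambda\in\mathbb R$ such that, with $\varphi(x)=\mathfrak B(x,\cdot)$ and $\tilde r=r\varphi:\mathfrak g\to\mathfrak g$, $[x,y]_r=\tilde r(x)\cdot y-\tilde r(y)\cdot x+\lambda[x,y]$ is a Lie bracket. $df(a^* )\in\mathfrak g=\mathfrak g^{**}$; $\langle\rho^*(x)a^*,y\rangle=-\langle a^*,\rho(x)y\rangle$; $\langle\mathrm{ad}^*(x)a^*,y\rangle=-\langle a^*,[x,y]\rangle$. For a Lie algebra $\mathfrak k$ and a $\mathfrak k$-Lie algebra $(\mathfrak a,\rho)$ (a Lie algebra $\mathfrak a$ with Lie homomorphism $\rho:\mathfrak k\to\mathrm{Der}(\mathfrak a)$), a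 nonabelian generalized Lax pair for a Hamiltonian system $(P,w,\mathcal H)$ is $(\mathfrak k,\rho,\mathfrak a,L,M)$ with smooth $L:P\to\mathfrak a$, $M:P\to\mathfrak k$ and $dL(p)X_{\mathcal H}(p)=-\rho(M(p))L(p)$; it is self-dual if $\mathfrak a$ carries a nondegenerate symmetric bilinear form $\mathfrak B$ with $\mathfrak B([x,y],z)=\mathfrak B(x,[y,z])$ and $\mathfrak B(\rho(\xi)x,y)+\mathfrak B(x,\rho(\xi)y)=0$. *)

theory Defs
  imports "HOL-Analysis.Analysis"
begin

definition lie_bracket :: "('a::real_vector \<Rightarrow> 'a \<Rightarrow> 'a) \<Rightarrow> bool" where
  "lie_bracket b \<longleftrightarrow> bilinear b \<and> (\<forall>x. b x x = 0) \<and>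
     (\<forall>x y z. b x (b y z) + b y (b z x) + b z (b x y) = 0)"

definition is_derivation :: "('a::real_vector \<Rightarrow> 'a \<Rightarrow> 'a) \<Rightarrow> ('a \<Rightarrow> 'a) \<Rightarrow> bool" where
  "is_derivation b D \<longleftrightarrow> linear D \<and> (\<forall>x y. D (b x y) = b (D x) y + b x (D y))"

definition k_lie_algebra ::
  "('k::real_vector \<Rightarrow> 'k \<Rightarrow> 'k) \<Rightarrow> ('k \<Rightarrow> 'a::real_vector \<Rightarrow> 'a) \<Rightarrow> ('a \<Rightarrow> 'a \<Rightarrow> 'a) \<Rightarrow> bool" where
  "k_lie_algebra bk rho ba \<longleftrightarrow> lie_bracket bk \<and> lie_bracket ba \<and> (\<forall>x. linear (\<lambda>\<xi>. rho \<xi> x)) \<and>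
     (\<forall>\<xi>. is_derivation ba (rho \<xi>)) \<and>
     (\<forall>\<xi> \<eta> x. rho (bk \<xi> \<eta>) x = rho \<xi> (rho \<eta> x) - rho \<eta> (rho \<xi> x))"

definition invariant_form ::
  "('k \<Rightarrow> 'a::real_vector \<Rightarrow> 'a) \<Rightarrow> ('a \<Rightarrow> 'a \<Rightarrow> 'a) \<Rightarrow> ('a \<Rightarrow> 'a \<Rightarrow> real) \<Rightarrow> bool" where
  "invariant_form rho ba B \<longleftrightarrow> bilinear B \<and> (\<forall>x y. B x y = B y x) \<and>
     (\<forall>x. (\<forall>y. B x y = 0) \<longrightarrow> x = 0) \<and>
     (\<forall>x y z. B (ba x y) z = B x (ba y z)) \<and>
     (\<forall>\<xi> x y. B (rho \<xi> x) y + B x (rho \<xi> y) = 0)"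

definition phiB :: "('g::euclidean_space \<Rightarrow> 'g \<Rightarrow> real) \<Rightarrow> 'g \<Rightarrow> ('g \<Rightarrow>\<^sub>L real)" where
  "phiB B x = Blinfun (\<lambda>y. B x y)"

(* [x,y]_r = rt(x).y - rt(y).x + lambda [x,y], with rt = r \<circ> phi *)
definition r_bracket ::
  "('g::euclidean_space \<Rightarrow> 'g \<Rightarrow> 'g) \<Rightarrow> ('g \<Rightarrow> 'g \<Rightarrow> 'g) \<Rightarrow> ('g \<Rightarrow> 'g \<Rightarrow> real)
    \<Rightarrow> (('g \<Rightarrow>\<^sub>L real) \<Rightarrow> 'g) \<Rightarrow> real \<Rightarrow> 'g \<Rightarrow> 'g \<Rightarrow> 'g" where
  "r_bracket rho br B r lam x y =
     rho (r (phiB B x)) y - rho (r (phiB B y)) x + lam *\<^sub>R br x y"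

definition triple_lie_algebra ::
  "('g::euclidean_space \<Rightarrow> 'g \<Rightarrow> 'g) \<Rightarrow> ('g \<Rightarrow> 'g \<Rightarrow> 'g) \<Rightarrow> ('g \<Rightarrow> 'g \<Rightarrow> 'g)
    \<Rightarrow> ('g \<Rightarrow> 'g \<Rightarrow> real) \<Rightarrow> (('g \<Rightarrow>\<^sub>L real) \<Rightarrow> 'g) \<Rightarrow> real \<Rightarrow> bool" where
  "triple_lie_algebra br0 rho br B r lam \<longleftrightarrow>
     k_lie_algebra br0 rho br \<and> invariant_form rho br B \<and> linear r \<and>
     lie_bracket (r_bracket rho br B r lam)"

(* C^\<infinity>: all iterated Frechet derivatives exist; D k x [h1,...,hk] is the k-th
   derivative at x applied to the directions h1..hk *)
definition smooth :: "('a::real_normed_vector \<Rightarrow> 'b::real_normed_vector) \<Rightarrow> bool" where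
  "smooth f \<longleftrightarrow> (\<exists>D :: nat \<Rightarrow> 'a \<Rightarrow> 'a list \<Rightarrow> 'b.
     (\<forall>x. D 0 x [] = f x) \<and>
     (\<forall>k x vs. length vs = k \<longrightarrow>
        ((\<lambda>y. D k y vs) has_derivative (\<lambda>h. D (Suc k) x (h # vs))) (at x)))"

(* df(a), an element of g = double dual, for f on the dual of g *)
definition dgrad :: "(('g::euclidean_space \<Rightarrow>\<^sub>L real) \<Rightarrow> real) \<Rightarrow> ('g \<Rightarrow>\<^sub>L real) \<Rightarrow> 'g" where
  "dgrad f a = (THE x. (f has_derivative (\<lambda>b. blinfun_apply b x)) (at a))"

definition lie_poisson ::
  "('g::euclidean_space \<Rightarrow> 'g \<Rightarrow> 'g) \<Rightarrow> (('g \<Rightarrow>\<^sub>L real) \<Rightarrow> real) \<Rightarrow> (('g \<Rightarrow>\<^sub>L real) \<Rightarrow> real)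
     \<Rightarrow> ('g \<Rightarrow>\<^sub>L real) \<Rightarrow> real" where
  "lie_poisson b f g a = blinfun_apply a (b (dgrad f a) (dgrad g a))"

definition rho_star :: "('g::euclidean_space \<Rightarrow> 'g \<Rightarrow> 'g) \<Rightarrow> 'g \<Rightarrow> ('g \<Rightarrow>\<^sub>L real) \<Rightarrow> ('g \<Rightarrow>\<^sub>L real)" where
  "rho_star rho x a = Blinfun (\<lambda>y. - blinfun_apply a (rho x y))"

definition ad_star :: "('g::euclidean_space \<Rightarrow> 'g \<Rightarrow> 'g) \<Rightarrow> 'g \<Rightarrow> ('g \<Rightarrow>\<^sub>L real) \<Rightarrow> ('g \<Rightarrow>\<^sub>L real)" where
  "ad_star br x a = Blinfun (\<lambda>y. - blinfun_apply a (br x y))"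

definition is_ham_vf ::
  "(('p::real_normed_vector \<Rightarrow> real) \<Rightarrow> ('p \<Rightarrow> real) \<Rightarrow> 'p \<Rightarrow> real) \<Rightarrow> ('p \<Rightarrow> real) \<Rightarrow> ('p \<Rightarrow> 'p) \<Rightarrow> bool" where
  "is_ham_vf pb H X \<longleftrightarrow>
     (\<forall>f f' p. smooth f \<longrightarrow> (f has_derivative f') (at p) \<longrightarrow> f' (X p) = pb H f p)"

definition nonabelian_gen_lax_pair ::
  "('k::real_normed_vector \<Rightarrow> 'k \<Rightarrow> 'k) \<Rightarrow> ('k \<Rightarrow> 'a::real_normed_vector \<Rightarrow> 'a) \<Rightarrow> ('a \<Rightarrow> 'a \<Rightarrow> 'a)
    \<Rightarrow> ('p::real_normed_vector \<Rightarrow> 'a) \<Rightarrow> ('p \<Rightarrow> 'k)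
    \<Rightarrow> (('p \<Rightarrow> real) \<Rightarrow> ('p \<Rightarrow> real) \<Rightarrow> 'p \<Rightarrow> real) \<Rightarrow> ('p \<Rightarrow> real) \<Rightarrow> bool" where
  "nonabelian_gen_lax_pair bk rho ba L M pb H \<longleftrightarrow>
     k_lie_algebra bk rho ba \<and> smooth L \<and> smooth M \<and>
     (\<exists>X. is_ham_vf pb H X \<and>
        (\<forall>p L'. (L has_derivative L') (at p) \<longrightarrow> L' (X p) = - rho (M p) (L p)))"

definition self_dual_nonabelian_gen_lax_pair ::
  "('k::real_normed_vector \<Rightarrow> 'k \<Rightarrow> 'k) \<Rightarrow> ('k \<Rightarrow> 'a::real_normed_vector \<Rightarrow> 'a) \<Rightarrow> ('a \<Rightarrow> 'a \<Rightarrow> 'a)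
    \<Rightarrow> ('a \<Rightarrow> 'a \<Rightarrow> real)
    \<Rightarrow> ('p::real_normed_vector \<Rightarrow> 'a) \<Rightarrow> ('p \<Rightarrow> 'k)
    \<Rightarrow> (('p \<Rightarrow> real) \<Rightarrow> ('p \<Rightarrow> real) \<Rightarrow> 'p \<Rightarrow> real) \<Rightarrow> ('p \<Rightarrow> real) \<Rightarrow> bool" where
  "self_dual_nonabelian_gen_lax_pair bk rho ba B L M pb H \<longleftrightarrow>
     nonabelian_gen_lax_pair bk rho ba L M pb H \<and> invariant_form rho ba B"

end

theory Submission imports Defs begin

(* The Hamiltonian vector field of H for the Lie-Poisson bracket {,}_r is
   X(a) = < a, [dH(a), .]_r >.  Because dH(a) is annihilated by rho^*(x)a and ad^*(x)a,
   the only surviving term of [dH(a), v]_r is rho(M(a)) v, so X(a) = a o rho(M(a)).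
   The map L(a) = sum_i a(e_i) e'_i is the B-representative of the functional a, i.e.
   B(y, L a) = a y; since rho(M(a)) is B-skew, the representative of a o rho(M(a)) is
   -rho(M(a)) (L a).  As L is linear, dL(a) X(a) = L(X a), which is the Lax equation. *)


(* Bounded linear maps are smooth: all derivatives beyond the first vanish. *)
lemma smooth_bounded_linear:
  assumes "bounded_linear f" shows "smooth f"
  unfolding smooth_def
proof (intro exI[of _ "\<lambda>k x vs. if k = 0 then f x else if k = 1 then f (hd vs) else 0"]
    conjI allI impI)
  fix k x and vs :: "'a list"
  show "((\<lambda>y. if k = 0 then f y else if k = 1 then f (hd vs) else 0) has_derivative
     (\<lambda>h. if Suc k = 0 then f x else if Suc k = 1 then f (hd (h # vs)) else 0)) (at x)"
    using bounded_linear_imp_has_derivative[OF assms] by (cases "k = 0") simp_all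
qed simp

lemma smooth_compose_bounded_linear:
  assumes "smooth g" "bounded_linear T" shows "smooth (\<lambda>x. T (g x))"
proof -
  obtain D where D0: "\<forall>x. D 0 x [] = g x" and DS: "\<forall>k x vs. length vs = k \<longrightarrow>
        ((\<lambda>y. D k y vs) has_derivative (\<lambda>h. D (Suc k) x (h # vs))) (at x)"
    using assms(1) unfolding smooth_def by blast
  show ?thesis unfolding smooth_def
  proof (intro exI[of _ "\<lambda>k x vs. T (D k x vs)"] conjI allI impI)
    fix k x and vs :: "'a list" assume "length vs = k"
    then show "((\<lambda>y. T (D k y vs)) has_derivative (\<lambda>h. T (D (Suc k) x (h # vs)))) (at x)"
      using bounded_linear.has_derivative[OF assms(2) DS[rule_format, of vs k x]] by simp
  qed (use D0 in simp)
qed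


definition coord :: "'g::euclidean_space \<Rightarrow> ('g \<Rightarrow>\<^sub>L real)" where
  "coord j = Blinfun (\<lambda>y. y \<bullet> j)"

lemma coord_apply [simp]: "blinfun_apply (coord j) y = y \<bullet> j"
  unfolding coord_def by (simp add: bounded_linear_Blinfun_apply bounded_linear_inner_left)

lemma blinfun_coord_expansion:
  fixes b :: "'g::euclidean_space \<Rightarrow>\<^sub>L real"
  shows "b = (\<Sum>j\<in>Basis. b j *\<^sub>R coord j)"
proof (rule blinfun_eqI)
  fix y :: 'g
  have "blinfun_apply b y = blinfun_apply b (\<Sum>j\<in>Basis. (y \<bullet> j) *\<^sub>R j)"
    by (simp add: euclidean_representation)
  also have "\<dots> = blinfun_apply (\<Sum>j\<in>Basis. b j *\<^sub>R coord j) y"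
    by (simp add: blinfun.sum_right blinfun.scaleR_right blinfun.sum_left
        blinfun.scaleR_left mult.commute)
  finally show "blinfun_apply b y = blinfun_apply (\<Sum>j\<in>Basis. b j *\<^sub>R coord j) y" .
qed

(* g is reflexive: every linear functional on g^* is evaluation at a vector of g.
   Applied to derivatives, this is what makes df(a) an element of g. *)
lemma derivative_is_evaluation:
  fixes f :: "('g::euclidean_space \<Rightarrow>\<^sub>L real) \<Rightarrow> real"
  assumes "(f has_derivative f') (at p)"
  shows "f' = (\<lambda>b. blinfun_apply b (\<Sum>j\<in>Basis. f' (coord j) *\<^sub>R j))"
proof
  fix b :: "'g \<Rightarrow>\<^sub>L real"
  interpret f': bounded_linear f' using has_derivative_bounded_linear[OF assms] .
  have "f' b = f' (\<Sum>j\<in>Basis. b j *\<^sub>R coord j)"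
    using blinfun_coord_expansion[of b] by simp
  also have "\<dots> = blinfun_apply b (\<Sum>j\<in>Basis. f' (coord j) *\<^sub>R j)"
    by (simp add: f'.sum f'.scaleR blinfun.sum_right blinfun.scaleR_right mult.commute)
  finally show "f' b = blinfun_apply b (\<Sum>j\<in>Basis. f' (coord j) *\<^sub>R j)" .
qed

lemma dgrad_eqI:
  fixes f :: "('g::euclidean_space \<Rightarrow>\<^sub>L real) \<Rightarrow> real"
  assumes "(f has_derivative (\<lambda>b. blinfun_apply b x)) (at p)"
  shows "dgrad f p = x"
  unfolding dgrad_def
proof (rule the_equality)
  fix x' assume "(f has_derivative (\<lambda>b. blinfun_apply b x')) (at p)"
  note same = has_derivative_unique[OF assms this]
  show "x' = x"
    by (rule euclidean_eqI) (use fun_cong[OF same, of "coord j" for j] in simp)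
qed (rule assms)

lemma derivative_dgrad:
  fixes f :: "('g::euclidean_space \<Rightarrow>\<^sub>L real) \<Rightarrow> real"
  assumes "(f has_derivative f') (at p)"
  shows "f' = (\<lambda>b. blinfun_apply b (dgrad f p))"
  using assms dgrad_eqI derivative_is_evaluation[OF assms] by metis

(* The gradient of a smooth function on g^* is smooth: its coordinates are
   second-order-shifted derivatives of the function. *)
lemma smooth_dgrad:
  fixes H :: "('g::euclidean_space \<Rightarrow>\<^sub>L real) \<Rightarrow> real"
  assumes "smooth H" shows "smooth (dgrad H)"
proof -
  obtain D where D0: "\<forall>x. D 0 x [] = H x" and DS: "\<forall>k x vs. length vs = k \<longrightarrow>
        ((\<lambda>y. D k y vs) has_derivative (\<lambda>h. D (Suc k) x (h # vs))) (at x)"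
    using assms unfolding smooth_def by blast
  have grad: "dgrad H x = (\<Sum>j\<in>Basis. D 1 x [coord j] *\<^sub>R j)" for x
  proof -
    have dH: "(H has_derivative (\<lambda>h. D 1 x [h])) (at x)"
      using DS[rule_format, of "[]" 0 x] D0 by simp
    show ?thesis
      by (rule dgrad_eqI) (use dH derivative_is_evaluation[OF dH] in simp)
  qed
  show ?thesis unfolding smooth_def
  proof (intro exI[of _ "\<lambda>k x vs. \<Sum>j\<in>Basis. D (Suc k) x (vs @ [coord j]) *\<^sub>R j"]
      conjI allI impI)
    fix x show "(\<Sum>j\<in>Basis. D (Suc 0) x ([] @ [coord j]) *\<^sub>R j) = dgrad H x"
      using grad by simp
  next
    fix k x and vs :: "('g \<Rightarrow>\<^sub>L real) list" assume "length vs = k"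
    then have "((\<lambda>y. D (Suc k) y (vs @ [coord j])) has_derivative
        (\<lambda>h. D (Suc (Suc k)) x (h # vs @ [coord j]))) (at x)" for j
      using DS[rule_format, of "vs @ [coord j]" "Suc k" x] by simp
    then show "((\<lambda>y. \<Sum>j\<in>Basis. D (Suc k) y (vs @ [coord j]) *\<^sub>R j) has_derivative
          (\<lambda>h. \<Sum>j\<in>Basis. D (Suc (Suc k)) x ((h # vs) @ [coord j]) *\<^sub>R j)) (at x)"
      by (auto intro!: has_derivative_sum has_derivative_scaleR_left)
  qed
qed


definition lie_poisson_ham_field ::
  "('g::euclidean_space \<Rightarrow> 'g \<Rightarrow> 'g) \<Rightarrow> (('g \<Rightarrow>\<^sub>L real) \<Rightarrow> real) \<Rightarrow> ('g \<Rightarrow>\<^sub>L real)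
     \<Rightarrow> ('g \<Rightarrow>\<^sub>L real)" where
  "lie_poisson_ham_field b H p = Blinfun (\<lambda>v. blinfun_apply p (b (dgrad H p) v))"

lemma lie_poisson_ham_field_is_ham_vf:
  assumes "bilinear b"
  shows "is_ham_vf (lie_poisson b) H (lie_poisson_ham_field b H)"
  unfolding is_ham_vf_def
proof (intro allI impI)
  fix f :: "('a \<Rightarrow>\<^sub>L real) \<Rightarrow> real" and f' p assume df: "(f has_derivative f') (at p)"
  have "bounded_linear (\<lambda>v. blinfun_apply p (b (dgrad H p) v))"
    using assms by (intro bounded_linear_blinfun_apply)
      (simp add: bilinear_def linear_conv_bounded_linear[symmetric])
  then show "f' (lie_poisson_ham_field b H p) = lie_poisson b H f p"
    unfolding derivative_dgrad[OF df] lie_poisson_ham_field_def lie_poisson_def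
    by (simp add: bounded_linear_Blinfun_apply)
qed

(* Conversely, any Hamiltonian vector field is given by this formula: test it
   against the smooth linear functions b \<mapsto> b v on g^*. *)
lemma ham_vf_lie_poisson_apply:
  fixes H :: "('g::euclidean_space \<Rightarrow>\<^sub>L real) \<Rightarrow> real"
  assumes "is_ham_vf (lie_poisson b) H X"
  shows "blinfun_apply (X p) v = blinfun_apply p (b (dgrad H p) v)"
proof -
  let ?ev = "\<lambda>a :: 'g \<Rightarrow>\<^sub>L real. blinfun_apply a v"
  have lin: "bounded_linear ?ev"
    by (rule bounded_bilinear.bounded_linear_left[OF bounded_bilinear_blinfun_apply])
  have d: "(?ev has_derivative ?ev) (at p)"
    by (rule bounded_linear_imp_has_derivative[OF lin])
  have "blinfun_apply (X p) v = lie_poisson b H ?ev p"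
    using assms smooth_bounded_linear[OF lin] d unfolding is_ham_vf_def by blast
  then show ?thesis using dgrad_eqI[OF d] unfolding lie_poisson_def by simp
qed


(* Alternating brackets are antisymmetric (polarise b (x + y) (x + y) = 0). *)
lemma lie_bracket_antisym:
  assumes "lie_bracket b" shows "b x y = - b y x"
proof -
  have bl: "bilinear b" and alt: "\<And>x. b x x = 0"
    using assms by (auto simp: lie_bracket_def)
  have "0 = b (x + y) (x + y)" using alt by simp
  also have "\<dots> = (b x x + b y x) + (b x y + b y y)"
    by (simp only: bilinear_ladd[OF bl] bilinear_radd[OF bl])
  also have "\<dots> = b x y + b y x"
    using alt by (simp add: add.commute)
  finally show ?thesis by (simp add: eq_neg_iff_add_eq_0)
qed

lemma phiB_apply:
  assumes "bilinear B" shows "blinfun_apply (phiB B x) = B x"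
  unfolding phiB_def using assms
  by (intro bounded_linear_Blinfun_apply)
    (simp add: bilinear_def linear_conv_bounded_linear[symmetric])

lemma linear_phiB:
  assumes "bilinear B" shows "linear (phiB B)"
proof (rule linearI)
  show "phiB B (x + y) = phiB B x + phiB B y" for x y
    by (rule blinfun_eqI) (simp add: phiB_apply[OF assms] blinfun.add_left bilinear_ladd[OF assms])
  show "phiB B (c *\<^sub>R x) = c *\<^sub>R phiB B x" for c x
    by (rule blinfun_eqI) (simp add: phiB_apply[OF assms] blinfun.scaleR_left bilinear_lmul[OF assms])
qed

lemma rho_star_apply:
  assumes "linear (rho x)"
  shows "blinfun_apply (rho_star rho x a) y = - blinfun_apply a (rho x y)"
proof -
  have "bounded_linear (\<lambda>y. - blinfun_apply a (rho x y))"
    using assms by (intro bounded_linear_minus bounded_linear_blinfun_apply)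
      (simp add: linear_conv_bounded_linear[symmetric])
  then show ?thesis unfolding rho_star_def by (simp add: bounded_linear_Blinfun_apply)
qed

lemma ad_star_apply:
  assumes "bilinear br"
  shows "blinfun_apply (ad_star br x a) y = - blinfun_apply a (br x y)"
proof -
  have "bounded_linear (\<lambda>y. - blinfun_apply a (br x y))"
    using assms by (intro bounded_linear_minus bounded_linear_blinfun_apply)
      (simp add: bilinear_def linear_conv_bounded_linear[symmetric])
  then show ?thesis unfolding ad_star_def by (simp add: bounded_linear_Blinfun_apply)
qed

lemma r_bracket_annihilated:
  assumes "lie_bracket br"
    and rho_h: "\<And>x. blinfun_apply a (rho x h) = 0"
    and br_h: "\<And>x. blinfun_apply a (br x h) = 0"
  shows "blinfun_apply a (r_bracket rho br B r lam h v) = blinfun_apply a (rho (r (phiB B h)) v)"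
proof -
  have "br h v = - br v h" by (rule lie_bracket_antisym[OF assms(1)])
  then show ?thesis using rho_h[of "r (phiB B v)"] br_h[of v]
    by (simp add: r_bracket_def blinfun.diff_right blinfun.add_right
        blinfun.scaleR_right blinfun.minus_right)
qed


(* With a B-dual pair of bases, sum_i f(e_i) e'_i is the B-representative of the
   linear functional f; both sides are linear in y and agree on the spanning set e. *)
lemma dual_basis_represents:
  fixes e e' :: "'i::finite \<Rightarrow> 'g::real_vector"
    and B :: "'g \<Rightarrow> 'g \<Rightarrow> real" and f :: "'g \<Rightarrow> real"
  assumes bl: "bilinear B" and sp: "span (range e) = UNIV"
    and db: "\<forall>i j. B (e i) (e' j) = (if i = j then 1 else 0)"
    and f: "linear f"
  shows "B y (\<Sum>i\<in>UNIV. f (e i) *\<^sub>R e' i) = f y"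
proof -
  let ?u = "\<Sum>i\<in>UNIV. f (e i) *\<^sub>R e' i"
  have lB: "linear (\<lambda>x. B x ?u)" using bl by (simp add: bilinear_def)
  have rB: "linear (B x)" for x using bl by (simp add: bilinear_def)
  have on_basis: "B (e k) ?u = f (e k)" for k
  proof -
    have "B (e k) ?u = (\<Sum>i\<in>UNIV. f (e i) * B (e k) (e' i))"
      by (simp add: linear_sum[OF rB] linear_scale[OF rB])
    also have "\<dots> = (\<Sum>i\<in>UNIV. if i = k then f (e k) else 0)"
      by (rule sum.cong) (auto simp: db)
    finally show ?thesis by simp
  qed
  show ?thesis
    using linear_eq_on_span[OF lB f, of "range e" y] on_basis sp by auto
qed

lemma nondegenerate_eqI:
  assumes bl: "bilinear B" and sym: "\<forall>x y. B x y = B y x"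
    and nd: "\<forall>x. (\<forall>y. B x y = 0) \<longrightarrow> x = 0"
    and same: "\<And>y. B y u = B y w"
  shows "u = w"
proof -
  have "B (u - w) y = 0" for y
    using same[of y] sym[rule_format, of u y] sym[rule_format, of w y]
    by (simp add: bilinear_lsub[OF bl])
  then have "u - w = 0" using nd by blast
  then show ?thesis by simp
qed

(* The representative of f o R is -R applied to the representative of f, for B-skew R.
   This is the invariance of the Casimir element Omega = sum_i e_i (x) e'_i. *)
lemma dual_basis_skew:
  fixes e e' :: "'i::finite \<Rightarrow> 'g::real_vector"
    and B :: "'g \<Rightarrow> 'g \<Rightarrow> real" and f :: "'g \<Rightarrow> real"
  assumes bl: "bilinear B" and sym: "\<forall>x y. B x y = B y x"
    and nd: "\<forall>x. (\<forall>y. B x y = 0) \<longrightarrow> x = 0"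
    and sp: "span (range e) = UNIV"
    and db: "\<forall>i j. B (e i) (e' j) = (if i = j then 1 else 0)"
    and R: "linear R" and skew: "\<And>x y. B (R x) y + B x (R y) = 0"
    and f: "linear f"
  shows "(\<Sum>i\<in>UNIV. f (R (e i)) *\<^sub>R e' i) = - R (\<Sum>i\<in>UNIV. f (e i) *\<^sub>R e' i)"
proof (rule nondegenerate_eqI[OF bl sym nd])
  let ?rep = "\<lambda>f. \<Sum>i\<in>UNIV. f (e i) *\<^sub>R e' i"
  fix y
  have "B y (?rep (\<lambda>x. f (R x))) = f (R y)"
    using dual_basis_represents[OF bl sp db linear_compose[OF R f, unfolded o_def]] .
  also have "\<dots> = B (R y) (?rep f)"
    using dual_basis_represents[OF bl sp db f] by simp
  also have "\<dots> = B y (- R (?rep f))"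
    using skew[of y "?rep f"] by (simp add: bilinear_rneg[OF bl] eq_neg_iff_add_eq_0)
  finally show "B y (?rep (\<lambda>x. f (R x))) = B y (- R (?rep f))" .
qed


(* The Lax equation along the Hamiltonian flow, with dL(a) = L since L is linear. *)
lemma lax_equation:
  fixes br0 br rho :: "'g::euclidean_space \<Rightarrow> 'g \<Rightarrow> 'g" and e e' :: "'i::finite \<Rightarrow> 'g"
  assumes tla: "triple_lie_algebra br0 rho br B r lam"
    and H_rho: "\<forall>a x. blinfun_apply (rho_star rho x a) (dgrad H a) = 0"
    and H_ad: "\<forall>a x. blinfun_apply (ad_star br x a) (dgrad H a) = 0"
    and sp: "span (range e) = UNIV"
    and db: "\<forall>i j. B (e i) (e' j) = (if i = j then 1 else 0)"
    and L_def: "\<forall>a. L a = (\<Sum>i\<in>UNIV. blinfun_apply a (e i) *\<^sub>R e' i)"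
    and M_def: "\<forall>a. M a = r (phiB B (dgrad H a))"
    and X: "is_ham_vf (lie_poisson (r_bracket rho br B r lam)) H X"
  shows "L (X a) = - rho (M a) (L a)"
proof -
  have kl: "k_lie_algebra br0 rho br" and inv: "invariant_form rho br B"
    using tla by (auto simp: triple_lie_algebra_def)
  have lie: "lie_bracket br" and lin_rho: "\<And>x. linear (rho x)"
    using kl by (auto simp: k_lie_algebra_def is_derivation_def)
  have bl: "bilinear B" and sym: "\<forall>x y. B x y = B y x"
    and nd: "\<forall>x. (\<forall>y. B x y = 0) \<longrightarrow> x = 0"
    and skew: "\<And>x y. B (rho (M a) x) y + B x (rho (M a) y) = 0"
    using inv by (auto simp: invariant_form_def)
  have a_lin: "linear (blinfun_apply a)"
    by (simp add: linear_conv_bounded_linear blinfun.bounded_linear_right)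
  have rho_grad: "blinfun_apply a (rho x (dgrad H a)) = 0" for x
    using H_rho[rule_format, where a=a and x=x] by (simp add: rho_star_apply[OF lin_rho])
  have br_grad: "blinfun_apply a (br x (dgrad H a)) = 0" for x
    using H_ad[rule_format, where a=a and x=x] lie by (simp add: ad_star_apply lie_bracket_def)
  have X_apply: "blinfun_apply (X a) v = blinfun_apply a (rho (M a) v)" for v
    using ham_vf_lie_poisson_apply[OF X, of a v]
      r_bracket_annihilated[where rho=rho, OF lie rho_grad br_grad] M_def by simp
  have "L (X a) = (\<Sum>i\<in>UNIV. blinfun_apply a (rho (M a) (e i)) *\<^sub>R e' i)"
    using L_def X_apply by simp
  also have "\<dots> = - rho (M a) (L a)"
    using dual_basis_skew[OF bl sym nd sp db lin_rho skew a_lin] L_def by simp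
  finally show ?thesis .
qed

theorem theorem6p5:
  fixes br0 br :: "'g::euclidean_space \<Rightarrow> 'g \<Rightarrow> 'g"
    and rho :: "'g \<Rightarrow> 'g \<Rightarrow> 'g"
    and B :: "'g \<Rightarrow> 'g \<Rightarrow> real"
    and r :: "('g \<Rightarrow>\<^sub>L real) \<Rightarrow> 'g"
    and lam :: real
    and H :: "('g \<Rightarrow>\<^sub>L real) \<Rightarrow> real"
    and e e' :: "'i::finite \<Rightarrow> 'g"
    and L M :: "('g \<Rightarrow>\<^sub>L real) \<Rightarrow> 'g"
  assumes tla: "triple_lie_algebra br0 rho br B r lam"
    and H_smooth: "smooth H"
    and H_rho: "\<forall>a x. blinfun_apply (rho_star rho x a) (dgrad H a) = 0"
    and H_ad: "\<forall>a x. blinfun_apply (ad_star br x a) (dgrad H a) = 0"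
    and basis: "inj e" "independent (range e)" "span (range e) = UNIV"
    and dual_basis: "\<forall>i j. B (e i) (e' j) = (if i = j then 1 else 0)"
    and L_def: "\<forall>a. L a = (\<Sum>i\<in>UNIV. blinfun_apply a (e i) *\<^sub>R e' i)"
    and M_def: "\<forall>a. M a = r (phiB B (dgrad H a))"
  shows "(\<forall>X. is_ham_vf (lie_poisson (r_bracket rho br B r lam)) H X \<longrightarrow>
            (\<forall>a L'. (L has_derivative L') (at a) \<longrightarrow> L' (X a) = - rho (M a) (L a)))
       \<and> self_dual_nonabelian_gen_lax_pair br0 rho br B L M
            (lie_poisson (r_bracket rho br B r lam)) H"
proof -
  let ?RB = "r_bracket rho br B r lam"
  have kl: "k_lie_algebra br0 rho br" and inv: "invariant_form rho br B"
    and lin_r: "linear r" and lie_RB: "lie_bracket ?RB"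
    using tla by (auto simp: triple_lie_algebra_def)
  have "L = (\<lambda>a. \<Sum>i\<in>UNIV. blinfun_apply a (e i) *\<^sub>R e' i)"
    using L_def by auto
  then have L_lin: "bounded_linear L"
    by (simp add: bounded_linear_sum bounded_linear_compose[OF bounded_linear_scaleR_left]
        bounded_bilinear.bounded_linear_left[OF bounded_bilinear_blinfun_apply])
  have M_smooth: "smooth M"
  proof -
    have "bounded_linear (\<lambda>x. r (phiB B x))"
      using linear_compose[OF linear_phiB lin_r] inv
      by (simp add: o_def linear_conv_bounded_linear invariant_form_def)
    moreover have "M = (\<lambda>a. r (phiB B (dgrad H a)))" using M_def by auto
    ultimately show ?thesis
      using smooth_compose_bounded_linear[OF smooth_dgrad[OF H_smooth]] by simp
  qed
  have lax: "L' (X a) = - rho (M a) (L a)"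
    if X: "is_ham_vf (lie_poisson ?RB) H X" and "(L has_derivative L') (at a)" for X a L'
    using has_derivative_unique[OF that(2) bounded_linear_imp_has_derivative[OF L_lin]]
      lax_equation[OF tla H_rho H_ad basis(3) dual_basis L_def M_def X] by simp
  have "is_ham_vf (lie_poisson ?RB) H (lie_poisson_ham_field ?RB H)"
    using lie_RB by (simp add: lie_poisson_ham_field_is_ham_vf lie_bracket_def)
  then show ?thesis
    unfolding self_dual_nonabelian_gen_lax_pair_def nonabelian_gen_lax_pair_def
    using lax kl inv smooth_bounded_linear[OF L_lin] M_smooth by blast
qed

end
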